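(* Let $r\ge 2$ be an integer and let $G$ be a finite simple connected $K_{r+1}$-free graph of order $n$ with minimum degree $\delta$. Put $c=\lceil \delta/2\rceil$. Then $$\gamma^{0}_{st}(G)\le n-\frac{r}{r-1}\left(-c+\sqrt{c^2+4\,\frac{r-1}{r}\,c\,n}\right).$$ Moreover, the bound is sharp: for every integer $r\ge 2$ there exists a connected $K_{r+1}$-free graph (in fact an $r$-partite graph of order $r^2(r-1)$) for which equality holds.
   Context: A graph is $K_p$-free if it contains no complete graph $K_p$ as a subgraph. For a vertex $v$ of a graph $G=(V,E)$, $N(v)$ is its open neighborhood, and for $f:V\to\mathbb{R}$ and $B\subseteq V$ write $f(B)=\sum_{v\in B}f(v)$; $f(V)$ is the weight of $f$. An inverse signed total dominating function (ISTDF) of $G$ is a function $f:V\to\{-1,1\}$ such that $f(N(v))\le 0$ for every $v\in V$. The inverse signed total domination number $\gamma^{0}_{st}(G)$ is the maximum weight of an ISTDF of $G$. *)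

theory Defs
  imports Complex_Main
begin

definition simple_graph :: "'a set \<Rightarrow> ('a \<Rightarrow> 'a \<Rightarrow> bool) \<Rightarrow> bool" where
  "simple_graph V E \<longleftrightarrow> finite V \<and> (\<forall>u v. E u v \<longrightarrow> u \<in> V \<and> v \<in> V)
     \<and> (\<forall>u v. E u v \<longrightarrow> E v u) \<and> (\<forall>v. \<not> E v v)"

definition nbhd :: "'a set \<Rightarrow> ('a \<Rightarrow> 'a \<Rightarrow> bool) \<Rightarrow> 'a \<Rightarrow> 'a set" where
  "nbhd V E v = {u \<in> V. E v u}"

definition connected_graph :: "'a set \<Rightarrow> ('a \<Rightarrow> 'a \<Rightarrow> bool) \<Rightarrow> bool" where
  "connected_graph V E \<longleftrightarrow> V \<noteq> {} \<and> (\<forall>u\<in>V. \<forall>v\<in>V. E\<^sup>*\<^sup>* u v)"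

definition clique_free :: "nat \<Rightarrow> 'a set \<Rightarrow> ('a \<Rightarrow> 'a \<Rightarrow> bool) \<Rightarrow> bool" where
  "clique_free p V E \<longleftrightarrow>
     \<not> (\<exists>S. S \<subseteq> V \<and> card S = p \<and> (\<forall>x\<in>S. \<forall>y\<in>S. x \<noteq> y \<longrightarrow> E x y))"

definition min_degree :: "'a set \<Rightarrow> ('a \<Rightarrow> 'a \<Rightarrow> bool) \<Rightarrow> nat" where
  "min_degree V E = Min ((\<lambda>v. card (nbhd V E v)) ` V)"

definition istdf :: "'a set \<Rightarrow> ('a \<Rightarrow> 'a \<Rightarrow> bool) \<Rightarrow> ('a \<Rightarrow> int) \<Rightarrow> bool" where
  "istdf V E f \<longleftrightarrow> (\<forall>v\<in>V. f v \<in> {-1, 1}) \<and> (\<forall>v\<in>V. sum f (nbhd V E v) \<le> 0)"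

definition inv_signed_total_dom :: "'a set \<Rightarrow> ('a \<Rightarrow> 'a \<Rightarrow> bool) \<Rightarrow> int" where
  "inv_signed_total_dom V E = Max {sum f V | f. istdf V E f}"

definition r_partite :: "nat \<Rightarrow> 'a set \<Rightarrow> ('a \<Rightarrow> 'a \<Rightarrow> bool) \<Rightarrow> bool" where
  "r_partite r V E \<longleftrightarrow> (\<exists>P :: 'a \<Rightarrow> nat. (\<forall>v\<in>V. P v < r) \<and> (\<forall>u v. E u v \<longrightarrow> P u \<noteq> P v))"

definition istd_bound :: "nat \<Rightarrow> nat \<Rightarrow> nat \<Rightarrow> real" where
  "istd_bound r \<delta> n =
     (let c = real_of_int \<lceil>real \<delta> / 2\<rceil> in
      real n - real r / (real r - 1) *
        (- c + sqrt (c\<^sup>2 + 4 * ((real r - 1) / real r) * c * real n)))"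

end

theory Submission
  imports Defs "HOL-Library.Nat_Bijection"
begin

text \<open>Let \<open>f\<close> be an ISTDF of maximum weight and \<open>M\<close> the set where it is \<open>-1\<close>, so that the
  weight is \<open>n - 2 |M|\<close>. Since \<open>f(N(v)) \<le> 0\<close>, every vertex has at least as many neighbours
  in \<open>M\<close> as outside it, hence at least \<open>c = \<lceil>\<delta>/2\<rceil>\<close> neighbours in \<open>M\<close>. Double counting
  the edges between \<open>V - M\<close> and \<open>M\<close> gives \<open>c (n - |M|) \<le> 2 e(M)\<close>, and Turan's theorem
  for the \<open>K\<^sub>r\<^sub>+\<^sub>1\<close>-free graph induced on \<open>M\<close> gives \<open>2 e(M) \<le> (r - 1)/r |M|\<^sup>2\<close>. Solving
  this quadratic inequality for \<open>|M|\<close> yields the bound.\<close>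

section \<open>Turan's theorem\<close>

text \<open>Counts ordered pairs, so for a symmetric relation \<open>edge_count E M M\<close> is twice the
  number of edges inside \<open>M\<close>.\<close>
definition edge_count :: "('a \<Rightarrow> 'a \<Rightarrow> bool) \<Rightarrow> 'a set \<Rightarrow> 'a set \<Rightarrow> nat" where
  "edge_count E X Y = (\<Sum>x\<in>X. card {y\<in>Y. E x y})"

lemma edge_count_commute:
  assumes "finite X" "finite Y" "\<And>x y. E x y \<Longrightarrow> E y x"
  shows "edge_count E X Y = edge_count E Y X"
proof -
  have E_commute: "E x y \<longleftrightarrow> E y x" for x y using assms(3) by blast
  have "edge_count E X Y = (\<Sum>x\<in>X. \<Sum>y\<in>Y. of_bool (E x y))"
    unfolding edge_count_def using assms by (simp add: Int_def)
  also have "\<dots> = (\<Sum>y\<in>Y. \<Sum>x\<in>X. of_bool (E y x))"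
    by (subst sum.swap) (simp add: E_commute)
  also have "\<dots> = edge_count E Y X"
    unfolding edge_count_def using assms by (simp add: Int_def)
  finally show ?thesis .
qed

lemma edge_count_Un_left:
  "finite X1 \<Longrightarrow> finite X2 \<Longrightarrow> X1 \<inter> X2 = {} \<Longrightarrow>
    edge_count E (X1 \<union> X2) Y = edge_count E X1 Y + edge_count E X2 Y"
  unfolding edge_count_def by (simp add: sum.union_disjoint)

lemma edge_count_Un_right:
  assumes "finite Y1" "finite Y2" "Y1 \<inter> Y2 = {}"
  shows "edge_count E X (Y1 \<union> Y2) = edge_count E X Y1 + edge_count E X Y2"
proof -
  have "card {y\<in>Y1 \<union> Y2. E x y} = card {y\<in>Y1. E x y} + card {y\<in>Y2. E x y}" for x
  proof -
    have "{y\<in>Y1 \<union> Y2. E x y} = {y\<in>Y1. E x y} \<union> {y\<in>Y2. E x y}" by auto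
    then show ?thesis using assms by (simp add: card_Un_disjoint disjoint_iff)
  qed
  then show ?thesis unfolding edge_count_def by (simp add: sum.distrib)
qed

lemma edge_count_split:
  assumes "finite A" "finite B" "A \<inter> B = {}" "\<And>x y. E x y \<Longrightarrow> E y x"
  shows "edge_count E (A \<union> B) (A \<union> B) = edge_count E A A + 2 * edge_count E B A + edge_count E B B"
  using edge_count_Un_left[OF assms(1-3)] edge_count_Un_right[OF assms(1-3)]
    edge_count_commute[OF assms(1,2,4)] by simp

lemma edge_count_complete:
  assumes "finite A" "\<forall>x\<in>A. \<forall>y\<in>A. x \<noteq> y \<longrightarrow> E x y" "\<And>x. \<not> E x x"
  shows "edge_count E A A = card A * (card A - 1)"
proof -
  have "{y\<in>A. E x y} = A - {x}" if "x \<in> A" for x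
    using assms(2,3) that by auto
  then show ?thesis unfolding edge_count_def using assms(1) by simp
qed

lemma clique_free_subset: "clique_free p V E \<Longrightarrow> W \<subseteq> V \<Longrightarrow> clique_free p W E"
  unfolding clique_free_def by blast

lemma edge_count_clique_free_2:
  assumes "clique_free 2 M E" "\<And>x y. E x y \<Longrightarrow> E y x" "\<And>x. \<not> E x x"
  shows "edge_count E M M = 0"
proof -
  have "{y\<in>M. E x y} = {}" if "x \<in> M" for x
  proof (rule ccontr)
    assume "{y\<in>M. E x y} \<noteq> {}"
    then obtain y where "y \<in> M" "E x y" by auto
    then have "{x, y} \<subseteq> M" "card {x, y} = 2" "\<forall>a\<in>{x,y}. \<forall>b\<in>{x,y}. a \<noteq> b \<longrightarrow> E a b"
      using that assms(2,3) by (auto simp: card_insert_if)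
    then show False using assms(1) unfolding clique_free_def by blast
  qed
  then show ?thesis unfolding edge_count_def by (intro sum.neutral ballI) (simp only: card.empty)
qed

lemma card_nbrs_in_clique_less:
  assumes "finite A" "A \<subseteq> M" "card A = p" "\<forall>x\<in>A. \<forall>y\<in>A. x \<noteq> y \<longrightarrow> E x y"
    and "clique_free (Suc p) M E" "v \<in> M - A" "\<And>x y. E x y \<Longrightarrow> E y x"
  shows "card {y\<in>A. E v y} < p"
proof (rule ccontr)
  assume "\<not> card {y\<in>A. E v y} < p"
  then have "{y\<in>A. E v y} = A"
    using assms(1,3) by (metis (no_types, lifting) card_seteq mem_Collect_eq not_less subsetI)
  then have "insert v A \<subseteq> M" "card (insert v A) = Suc p"
    "\<forall>x\<in>insert v A. \<forall>y\<in>insert v A. x \<noteq> y \<longrightarrow> E x y"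
    using assms(1-4,6) by (auto intro: assms(7))
  then show False using assms(5) unfolding clique_free_def by blast
qed

theorem turan_edge_count:
  assumes sym: "\<And>x y. E x y \<Longrightarrow> E y x" and irrefl: "\<And>x. \<not> E x x"
  shows "finite M \<Longrightarrow> clique_free (Suc (Suc k)) M E \<Longrightarrow> Suc k * edge_count E M M \<le> k * (card M)\<^sup>2"
proof (induction k arbitrary: M)
  case 0
  then have "clique_free 2 M E" by (simp add: numeral_2_eq_2)
  then show ?case using edge_count_clique_free_2[of M E, OF _ sym irrefl] by simp
next
  case (Suc k)
  show ?case using Suc.prems
  proof (induction "card M" arbitrary: M rule: less_induct)
    case less
    show ?case
    proof (cases "clique_free (Suc (Suc k)) M E")
      case True
      have "Suc k * (Suc (Suc k) * edge_count E M M) = Suc (Suc k) * (Suc k * edge_count E M M)"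
        by (rule mult.left_commute)
      also have "\<dots> \<le> Suc (Suc k) * (k * (card M)\<^sup>2)"
        using Suc.IH[OF less.prems(1) True] by (rule mult_left_mono) simp
      also have "\<dots> \<le> Suc k * (Suc k * (card M)\<^sup>2)"
        by (simp add: algebra_simps)
      finally show ?thesis by (simp only: mult_le_cancel1 zero_less_Suc simp_thms)
    next
      case False
      then obtain A where A: "A \<subseteq> M" "card A = Suc (Suc k)" "\<forall>x\<in>A. \<forall>y\<in>A. x \<noteq> y \<longrightarrow> E x y"
        unfolding clique_free_def by blast
      define B where "B = M - A"
      have fin: "finite A" "finite B" using A(1) less.prems(1) finite_subset B_def by auto
      have M: "M = A \<union> B" "A \<inter> B = {}" using A(1) B_def by auto
      have card_M: "card M = Suc (Suc k) + card B"
        using card_Un_disjoint[OF fin M(2)] A(2) M(1) by simp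
      have IH_B: "Suc (Suc k) * edge_count E B B \<le> Suc k * (card B)\<^sup>2"
        using less.hyps[of B] card_M fin(2) clique_free_subset[OF less.prems(2)] B_def by auto
      have clique_A: "edge_count E A A = Suc (Suc k) * Suc k"
        using edge_count_complete[OF fin(1) A(3) irrefl] A(2) by simp
      have between: "edge_count E B A \<le> card B * Suc k"
      proof -
        have "card {y\<in>A. E v y} \<le> Suc k" if "v \<in> B" for v
          using card_nbrs_in_clique_less[OF fin(1) A less.prems(2) _ sym] that B_def by fastforce
        then have "edge_count E B A \<le> (\<Sum>v\<in>B. Suc k)" unfolding edge_count_def by (rule sum_mono)
        then show ?thesis by simp
      qed
      have split: "edge_count E M M = edge_count E A A + 2 * edge_count E B A + edge_count E B B"
        unfolding M(1) by (rule edge_count_split[OF fin M(2) sym])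
      have "Suc (Suc k) * edge_count E M M = Suc (Suc k) * edge_count E A A
          + 2 * (Suc (Suc k) * edge_count E B A) + Suc (Suc k) * edge_count E B B"
        unfolding split by (simp add: algebra_simps)
      also have "\<dots> \<le> Suc (Suc k) * (Suc (Suc k) * Suc k) + 2 * (Suc (Suc k) * (card B * Suc k))
          + Suc k * (card B)\<^sup>2"
        using clique_A between IH_B by (intro add_mono mult_left_mono) simp_all
      also have "\<dots> = Suc k * (card M)\<^sup>2"
        unfolding card_M by (simp add: power2_eq_square algebra_simps)
      finally show ?thesis .
    qed
  qed
qed

section \<open>The upper bound\<close>

lemma sum_plus_minus_one:
  fixes f :: "'a \<Rightarrow> int"
  assumes "finite X" "\<And>x. x \<in> X \<Longrightarrow> f x = 1 \<or> f x = -1"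
  shows "sum f X = int (card {x\<in>X. f x = 1}) - int (card {x\<in>X. f x = -1})"
proof -
  have "sum f X = (\<Sum>x\<in>X. of_bool (f x = 1) - of_bool (f x = -1))"
    using assms(2) by (intro sum.cong) auto
  also have "\<dots> = int (card {x\<in>X. f x = 1}) - int (card {x\<in>X. f x = -1})"
    using assms(1) by (simp add: sum_subtractf Int_def)
  finally show ?thesis .
qed

lemma finite_istdf_weights:
  assumes "finite V"
  shows "finite {sum f V | f. istdf V E f}"
proof (rule finite_subset)
  show "{sum f V | f. istdf V E f} \<subseteq> {- int (card V) .. int (card V)}"
  proof
    fix x assume "x \<in> {sum f V | f. istdf V E f}"
    then obtain f where f: "istdf V E f" "x = sum f V" by auto
    have "\<bar>sum f V\<bar> \<le> (\<Sum>v\<in>V. \<bar>f v\<bar>)" by (rule sum_abs)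
    also have "\<dots> = (\<Sum>v\<in>V. 1)" using f(1) unfolding istdf_def by (intro sum.cong) auto
    finally show "x \<in> {- int (card V) .. int (card V)}" using f(2) by auto
  qed
qed simp

lemma istdf_minus_one: "istdf V E (\<lambda>_. -1)"
  unfolding istdf_def by simp

lemma inv_signed_total_dom_attained:
  assumes "finite V"
  obtains f where "istdf V E f" "inv_signed_total_dom V E = sum f V"
proof -
  have "inv_signed_total_dom V E \<in> {sum f V | f. istdf V E f}"
    unfolding inv_signed_total_dom_def
    using finite_istdf_weights[OF assms] istdf_minus_one by (intro Max_in) auto
  then show ?thesis using that by blast
qed

lemma istdf_weight_le_inv_signed_total_dom:
  "finite V \<Longrightarrow> istdf V E f \<Longrightarrow> sum f V \<le> inv_signed_total_dom V E"
  unfolding inv_signed_total_dom_def by (rule Max_ge[OF finite_istdf_weights]) auto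

lemma istdf_neighbour_signs:
  assumes f: "istdf V E f" and "finite V" "v \<in> V"
  shows "card {u\<in>V. E v u \<and> f u = 1} \<le> card {u\<in>V. E v u \<and> f u = -1}"
    and "\<lceil>real (card (nbhd V E v)) / 2\<rceil> \<le> int (card {u\<in>V. E v u \<and> f u = -1})"
proof -
  have fin: "finite (nbhd V E v)" using assms(2) unfolding nbhd_def by simp
  have split: "nbhd V E v = {u\<in>V. E v u \<and> f u = 1} \<union> {u\<in>V. E v u \<and> f u = -1}"
    using f unfolding istdf_def nbhd_def by auto
  have "sum f (nbhd V E v)
      = int (card {u\<in>V. E v u \<and> f u = 1}) - int (card {u\<in>V. E v u \<and> f u = -1})"
    using sum_plus_minus_one[OF fin, of f] f unfolding istdf_def nbhd_def
    by (simp add: conj_assoc) blast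
  moreover have "sum f (nbhd V E v) \<le> 0" using f assms(3) unfolding istdf_def by blast
  ultimately show le: "card {u\<in>V. E v u \<and> f u = 1} \<le> card {u\<in>V. E v u \<and> f u = -1}"
    by linarith
  have "card (nbhd V E v) = card {u\<in>V. E v u \<and> f u = 1} + card {u\<in>V. E v u \<and> f u = -1}"
    unfolding split using assms(2) by (subst card_Un_disjoint) auto
  then show "\<lceil>real (card (nbhd V E v)) / 2\<rceil> \<le> int (card {u\<in>V. E v u \<and> f u = -1})"
    using le by (simp add: ceiling_le_iff)
qed

lemma quadratic_lower_bound:
  fixes r c n m :: real
  assumes "r > 1" "c \<ge> 0" "m \<ge> 0" "r * c * (n - m) \<le> (r - 1) * m\<^sup>2"
  shows "r / (r - 1) * (- c + sqrt (c\<^sup>2 + 4 * ((r - 1) / r) * c * n)) \<le> 2 * m"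
proof -
  define q where "q = (r - 1) / r"
  have q: "q > 0" "r / (r - 1) * q = 1" using assms(1) unfolding q_def by auto
  have "c * (n - m) \<le> q * m\<^sup>2"
    using assms(1,4) unfolding q_def by (simp add: field_simps)
  then have "c\<^sup>2 + 4 * q * c * n \<le> (2 * q * m + c)\<^sup>2"
    using q(1) mult_left_mono[of "c * (n - m)" "q * m\<^sup>2" q]
    by (simp add: power2_eq_square algebra_simps)
  then have "sqrt (c\<^sup>2 + 4 * q * c * n) \<le> 2 * q * m + c"
    using q(1) assms(2,3) real_sqrt_le_mono by fastforce
  then have "r / (r - 1) * (- c + sqrt (c\<^sup>2 + 4 * q * c * n)) \<le> r / (r - 1) * (2 * q * m)"
    using assms(1) by (intro mult_left_mono) auto
  also have "\<dots> = 2 * m * (r / (r - 1) * q)" by (simp only: mult_ac)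
  also have "\<dots> = 2 * m" by (simp only: q(2) mult_1_right)
  finally show ?thesis unfolding q_def .
qed

lemma istdf_minus_set_quadratic:
  assumes "r \<ge> 2" and G: "simple_graph V E" and "clique_free (r + 1) V E" and f: "istdf V E f"
  defines "M \<equiv> {v\<in>V. f v = -1}"
  shows "real r * \<lceil>real (min_degree V E) / 2\<rceil> * (real (card V) - real (card M))
    \<le> (real r - 1) * (real (card M))\<^sup>2"
proof -
  have fin: "finite V" and sym: "\<And>x y. E x y \<Longrightarrow> E y x" and irrefl: "\<And>x. \<not> E x x"
    using G unfolding simple_graph_def by auto
  define P where "P = {v\<in>V. f v = 1}"
  define c where "c = \<lceil>real (min_degree V E) / 2\<rceil>"
  have PM: "V = P \<union> M" "P \<inter> M = {}" "finite P" "finite M"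
    using f fin unfolding P_def M_def istdf_def by auto
  have card_V: "card V = card P + card M" using PM card_Un_disjoint by simp
  have nbrs: "{u\<in>P. E v u} = {u\<in>V. E v u \<and> f u = 1}" "{u\<in>M. E v u} = {u\<in>V. E v u \<and> f u = -1}"
    for v unfolding P_def M_def by auto
  have "c \<le> int (card {u\<in>M. E v u})" if "v \<in> V" for v
  proof -
    have "min_degree V E \<le> card (nbhd V E v)"
      unfolding min_degree_def using fin that by (intro Min_le) auto
    then have "c \<le> \<lceil>real (card (nbhd V E v)) / 2\<rceil>" unfolding c_def
      by (intro ceiling_mono divide_right_mono) auto
    also have "\<dots> \<le> int (card {u\<in>M. E v u})"
      using istdf_neighbour_signs(2)[OF f fin that] unfolding nbrs .
    finally show ?thesis .
  qed
  then have "c * int (card P) \<le> (\<Sum>v\<in>P. int (card {u\<in>M. E v u}))"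
    using sum_mono[of P "\<lambda>_. c"] PM(1) by (simp add: mult.commute)
  also have "\<dots> = int (edge_count E P M)"
    unfolding edge_count_def by simp
  also have "edge_count E P M = edge_count E M P"
    using edge_count_commute PM(3,4) sym by blast
  also have "\<dots> \<le> edge_count E M M"
    unfolding edge_count_def nbrs using istdf_neighbour_signs(1)[OF f fin] PM(1)
    by (intro sum_mono) blast
  finally have lower: "c * int (card P) \<le> int (edge_count E M M)" by simp
  obtain k where k: "r = Suc k" using assms(1) not0_implies_Suc by force
  have "Suc k * edge_count E M M \<le> k * (card M)\<^sup>2"
    using turan_edge_count[where E = E, OF sym irrefl PM(4)] clique_free_subset[OF assms(3)] k
    unfolding M_def by auto
  then have "real (Suc k * edge_count E M M) \<le> real (k * (card M)\<^sup>2)"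
    by (simp only: of_nat_le_iff)
  then have Turan: "real r * real (edge_count E M M) \<le> (real r - 1) * (real (card M))\<^sup>2"
    unfolding k by (simp add: algebra_simps)
  have "real r * c * (real (card V) - real (card M)) = real r * (c * real (card P))"
    using card_V by simp
  also have "\<dots> \<le> real r * real (edge_count E M M)"
  proof (rule mult_left_mono)
    show "c * real (card P) \<le> real (edge_count E M M)"
      using lower by (metis of_int_le_iff of_int_mult of_int_of_nat_eq)
  qed simp
  also note Turan
  finally show ?thesis by (simp only: c_def)
qed

lemma istdf_weight:
  assumes f: "istdf V E f" and "finite V"
  shows "sum f V = int (card V) - 2 * int (card {v\<in>V. f v = -1})"
proof -
  define P where "P = {v\<in>V. f v = 1}"
  define M where "M = {v\<in>V. f v = -1}"
  have "V = P \<union> M" "P \<inter> M = {}" "finite P" "finite M"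
    using f assms(2) unfolding P_def M_def istdf_def by auto
  then have "card V = card P + card M" using card_Un_disjoint by simp
  moreover have "sum f V = int (card P) - int (card M)"
    using f assms(2) unfolding P_def M_def istdf_def by (intro sum_plus_minus_one) auto
  ultimately show ?thesis unfolding M_def by linarith
qed

theorem istdf_weight_le_istd_bound:
  assumes "r \<ge> 2" "simple_graph V E" "clique_free (r + 1) V E" and f: "istdf V E f"
  shows "real_of_int (sum f V) \<le> istd_bound r (min_degree V E) (card V)"
proof -
  define m where "m = real (card {v\<in>V. f v = -1})"
  define c where "c = real_of_int \<lceil>real (min_degree V E) / 2\<rceil>"
  have "finite V" using assms(2) unfolding simple_graph_def by simp
  then have weight: "real_of_int (sum f V) = real (card V) - 2 * m"
    unfolding m_def istdf_weight[OF f \<open>finite V\<close>] by simp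
  have r: "real r > 1" using assms(1) by simp
  have c: "c \<ge> 0" unfolding c_def by simp
  have m: "m \<ge> 0" unfolding m_def by simp
  have "real r * c * (real (card V) - m) \<le> (real r - 1) * m\<^sup>2"
    using istdf_minus_set_quadratic[OF assms] unfolding m_def c_def .
  then have "real r / (real r - 1) * (- c + sqrt (c\<^sup>2 + 4 * ((real r - 1) / real r) * c * real (card V)))
      \<le> 2 * m"
    by (rule quadratic_lower_bound[OF r c m])
  then have "real (card V) - 2 * m \<le> real (card V) - real r / (real r - 1) *
      (- c + sqrt (c\<^sup>2 + 4 * ((real r - 1) / real r) * c * real (card V)))"
    by (rule diff_left_mono)
  then show ?thesis unfolding weight istd_bound_def Let_def c_def .
qed

corollary inv_signed_total_dom_le_istd_bound:
  assumes "r \<ge> 2" "simple_graph V E" "clique_free (r + 1) V E"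
  shows "real_of_int (inv_signed_total_dom V E) \<le> istd_bound r (min_degree V E) (card V)"
proof -
  have "finite V" using assms(2) unfolding simple_graph_def by blast
  then obtain f where "istdf V E f" "inv_signed_total_dom V E = sum f V"
    by (rule inv_signed_total_dom_attained)
  then show ?thesis using istdf_weight_le_istd_bound[OF assms] by simp
qed

section \<open>Sharpness\<close>

lemma r_partite_clique_free:
  assumes "r_partite s V E"
  shows "clique_free (s + 1) V E"
  unfolding clique_free_def
proof
  obtain P where P: "\<forall>v\<in>V. P v < s" "\<forall>u v. E u v \<longrightarrow> P u \<noteq> P v"
    using assms unfolding r_partite_def by blast
  assume "\<exists>S. S \<subseteq> V \<and> card S = s + 1 \<and> (\<forall>x\<in>S. \<forall>y\<in>S. x \<noteq> y \<longrightarrow> E x y)"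
  then obtain S where S: "S \<subseteq> V" "card S = s + 1" "\<forall>x\<in>S. \<forall>y\<in>S. x \<noteq> y \<longrightarrow> E x y"
    by blast
  have "inj_on P S" using S(3) P(2) unfolding inj_on_def by blast
  then have "card S = card (P ` S)" by (simp add: card_image)
  also have "\<dots> \<le> card {..<s}" using S(1) P(1) by (intro card_mono) auto
  finally show False using S(2) by simp
qed

text \<open>The extremal graph for \<open>s \<ge> 2\<close>: a vertex \<open>(a, i, j)\<close> lies in part \<open>a < s\<close> and block
  \<open>i < s - 1\<close>, and it is a hub if \<open>j = s - 1\<close>. With sign \<open>-1\<close> exactly on the hubs, a non-hub sees \<open>s - 1\<close> non-hubs and \<open>s - 1\<close> hubs
  and a hub sees \<open>(s - 1)\<^sup>2\<close> of each, so the minimum degree is \<open>2 (s - 1)\<close> and the weight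
  \<open>s (s - 1)\<^sup>2 - s (s - 1)\<close> attains the bound.\<close>
definition extremal_vertices :: "nat \<Rightarrow> (nat \<times> nat \<times> nat) set" where
  "extremal_vertices s = {..<s} \<times> {..<s - 1} \<times> {..s - 1}"

definition extremal_hubs :: "nat \<Rightarrow> (nat \<times> nat \<times> nat) set" where
  "extremal_hubs s = {..<s} \<times> {..<s - 1} \<times> {s - 1}"

fun extremal_adj :: "nat \<Rightarrow> nat \<times> nat \<times> nat \<Rightarrow> nat \<times> nat \<times> nat \<Rightarrow> bool" where
  "extremal_adj s (a, i, j) (b, i', j') \<longleftrightarrow>
     a \<noteq> b \<and> (i = i' \<and> (j = j' \<or> j = s - 1 \<or> j' = s - 1) \<or> j = s - 1 \<and> j' = s - 1)"

definition extremal_nbrs :: "nat \<Rightarrow> nat \<times> nat \<times> nat \<Rightarrow> (nat \<times> nat \<times> nat) set" where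
  "extremal_nbrs s t = {t' \<in> extremal_vertices s. extremal_adj s t t'}"

lemma extremal_adj_sym: "extremal_adj s t t' \<Longrightarrow> extremal_adj s t' t"
  by (cases t; cases t') auto

lemma extremal_adj_irrefl: "\<not> extremal_adj s t t"
  by (cases t) auto

lemma card_extremal_nbrs:
  assumes "t \<in> extremal_vertices s"
  defines "d \<equiv> if t \<in> extremal_hubs s then (s - 1)\<^sup>2 else s - 1"
  shows "card (extremal_nbrs s t - extremal_hubs s) = d \<and> card (extremal_nbrs s t \<inter> extremal_hubs s) = d"
proof -
  obtain a i j where t: "t = (a, i, j)" "a < s" "i < s - 1" "j \<le> s - 1"
    using assms(1) unfolding extremal_vertices_def by auto
  define B where "B = {..<s} - {a}"
  have B: "card B = s - 1" using t(2) unfolding B_def by simp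
  show ?thesis
  proof (cases "j = s - 1")
    case True
    then have "extremal_nbrs s t - extremal_hubs s = B \<times> {i} \<times> {..<s - 1}"
      "extremal_nbrs s t \<inter> extremal_hubs s = B \<times> {..<s - 1} \<times> {s - 1}"
      using t unfolding extremal_nbrs_def extremal_vertices_def extremal_hubs_def B_def by auto
    moreover have "t \<in> extremal_hubs s" using t True unfolding extremal_hubs_def by simp
    ultimately show ?thesis using B unfolding d_def by (simp add: card_cartesian_product power2_eq_square)
  next
    case False
    then have "extremal_nbrs s t - extremal_hubs s = B \<times> {i} \<times> {j}"
      "extremal_nbrs s t \<inter> extremal_hubs s = B \<times> {i} \<times> {s - 1}"
      using t unfolding extremal_nbrs_def extremal_vertices_def extremal_hubs_def B_def by auto
    moreover have "t \<notin> extremal_hubs s" using t False unfolding extremal_hubs_def by simp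
    ultimately show ?thesis using B unfolding d_def by (simp add: card_cartesian_product)
  qed
qed

text \<open>The extremal graph has to live on \<open>nat\<close>, so its vertex triples are encoded injectively.\<close>
definition triple_encode :: "nat \<times> nat \<times> nat \<Rightarrow> nat" where
  "triple_encode t = prod_encode (fst t, prod_encode (snd t))"

lemma inj_triple_encode: "inj triple_encode"
  unfolding triple_encode_def inj_def by (auto simp: prod_encode_eq prod_eq_iff)

definition extremal_V :: "nat \<Rightarrow> nat set" where
  "extremal_V s = triple_encode ` extremal_vertices s"

definition extremal_E :: "nat \<Rightarrow> nat \<Rightarrow> nat \<Rightarrow> bool" where
  "extremal_E s x y \<longleftrightarrow> (\<exists>t\<in>extremal_vertices s. \<exists>t'\<in>extremal_vertices s.
     x = triple_encode t \<and> y = triple_encode t' \<and> extremal_adj s t t')"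

definition extremal_sign :: "nat \<Rightarrow> nat \<Rightarrow> int" where
  "extremal_sign s x = (if x \<in> triple_encode ` extremal_hubs s then -1 else 1)"

lemma extremal_E_triple_encode:
  "t \<in> extremal_vertices s \<Longrightarrow> t' \<in> extremal_vertices s \<Longrightarrow>
    extremal_E s (triple_encode t) (triple_encode t') \<longleftrightarrow> extremal_adj s t t'"
  unfolding extremal_E_def using inj_triple_encode by (auto simp: inj_eq)

lemma simple_graph_extremal: "simple_graph (extremal_V s) (extremal_E s)"
  unfolding simple_graph_def extremal_V_def extremal_E_def extremal_vertices_def
  using extremal_adj_sym extremal_adj_irrefl inj_triple_encode by (auto simp: inj_eq)

lemma card_extremal_V: "s \<ge> 1 \<Longrightarrow> card (extremal_V s) = s\<^sup>2 * (s - 1)"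
  unfolding extremal_V_def extremal_vertices_def
  by (simp add: card_image inj_on_subset[OF inj_triple_encode] card_cartesian_product power2_eq_square)

lemma nbhd_extremal:
  assumes "t \<in> extremal_vertices s"
  shows "nbhd (extremal_V s) (extremal_E s) (triple_encode t) = triple_encode ` extremal_nbrs s t"
  using assms unfolding nbhd_def extremal_V_def extremal_nbrs_def
  by (auto simp: extremal_E_triple_encode)

lemma sum_extremal_sign_image:
  assumes "finite X"
  shows "sum (extremal_sign s) (triple_encode ` X)
    = int (card (X - extremal_hubs s)) - int (card (X \<inter> extremal_hubs s))"
proof -
  have "sum (extremal_sign s) (triple_encode ` X) = (\<Sum>t\<in>X. if t \<in> extremal_hubs s then -1 else 1)"
    unfolding extremal_sign_def using inj_triple_encode
    by (simp add: sum.reindex inj_on_subset inj_image_mem_iff)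
  also have "\<dots> = int (card (X - extremal_hubs s)) - int (card (X \<inter> extremal_hubs s))"
  proof -
    have "{t\<in>X. (if t \<in> extremal_hubs s then -1 else 1) = (1::int)} = X - extremal_hubs s"
      "{t\<in>X. (if t \<in> extremal_hubs s then -1 else 1) = (-1::int)} = X \<inter> extremal_hubs s"
      by auto
    then show ?thesis using sum_plus_minus_one[OF assms, of "\<lambda>t. if t \<in> extremal_hubs s then -1 else 1"]
      by (simp only:) simp
  qed
  finally show ?thesis .
qed

lemma extremal_degree_and_sign:
  assumes "t \<in> extremal_vertices s"
  defines "N \<equiv> nbhd (extremal_V s) (extremal_E s) (triple_encode t)"
  shows "card N = 2 * (if t \<in> extremal_hubs s then (s - 1)\<^sup>2 else s - 1)"
    and "sum (extremal_sign s) N = 0"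
proof -
  have fin: "finite (extremal_nbrs s t)"
    unfolding extremal_nbrs_def extremal_vertices_def by simp
  have "card N = card (extremal_nbrs s t)"
    unfolding N_def nbhd_extremal[OF assms(1)]
    by (simp add: card_image inj_on_subset[OF inj_triple_encode])
  also have "\<dots> = card (extremal_nbrs s t \<inter> extremal_hubs s) + card (extremal_nbrs s t - extremal_hubs s)"
    using fin by (rule card_Int_Diff)
  finally show "card N = 2 * (if t \<in> extremal_hubs s then (s - 1)\<^sup>2 else s - 1)"
    using card_extremal_nbrs[OF assms(1)] by simp
  show "sum (extremal_sign s) N = 0"
    unfolding N_def nbhd_extremal[OF assms(1)] sum_extremal_sign_image[OF fin]
    using card_extremal_nbrs[OF assms(1)] by simp
qed

lemma istdf_extremal_sign: "istdf (extremal_V s) (extremal_E s) (extremal_sign s)"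
  unfolding istdf_def
proof (intro conjI ballI)
  fix x assume "x \<in> extremal_V s"
  then obtain t where "t \<in> extremal_vertices s" "x = triple_encode t"
    unfolding extremal_V_def by blast
  then show "sum (extremal_sign s) (nbhd (extremal_V s) (extremal_E s) x) \<le> 0"
    using extremal_degree_and_sign(2) by simp
qed (simp add: extremal_sign_def)

lemma min_degree_extremal:
  assumes "s \<ge> 2"
  shows "min_degree (extremal_V s) (extremal_E s) = 2 * (s - 1)"
  unfolding min_degree_def
proof (rule Min_eqI)
  show "finite ((\<lambda>v. card (nbhd (extremal_V s) (extremal_E s) v)) ` extremal_V s)"
    unfolding extremal_V_def extremal_vertices_def by simp
  show "y \<ge> 2 * (s - 1)" if "y \<in> (\<lambda>v. card (nbhd (extremal_V s) (extremal_E s) v)) ` extremal_V s" for y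
  proof -
    have "s - 1 \<le> (s - 1)\<^sup>2" by (cases "s - 1") (simp_all add: power2_eq_square)
    then show ?thesis using that extremal_degree_and_sign(1) unfolding extremal_V_def by auto
  qed
  have "(0, 0, 0) \<in> extremal_vertices s" "(0, 0, 0) \<notin> extremal_hubs s"
    using assms unfolding extremal_vertices_def extremal_hubs_def by auto
  then have "2 * (s - 1) = card (nbhd (extremal_V s) (extremal_E s) (triple_encode (0, 0, 0)))"
    and "triple_encode (0, 0, 0) \<in> extremal_V s"
    using extremal_degree_and_sign(1) unfolding extremal_V_def by auto
  then show "2 * (s - 1) \<in> (\<lambda>v. card (nbhd (extremal_V s) (extremal_E s) v)) ` extremal_V s"
    by (rule image_eqI)
qed

lemma weight_extremal_sign:
  assumes "s \<ge> 1"
  shows "real_of_int (sum (extremal_sign s) (extremal_V s)) = real s * (real s - 1) * (real s - 2)"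
proof -
  have "extremal_vertices s - extremal_hubs s = {..<s} \<times> {..<s - 1} \<times> {..<s - 1}"
    "extremal_vertices s \<inter> extremal_hubs s = extremal_hubs s"
    unfolding extremal_vertices_def extremal_hubs_def by auto
  then have "sum (extremal_sign s) (extremal_V s) = int (s * (s - 1) * (s - 1)) - int (s * (s - 1))"
    unfolding extremal_V_def
    by (simp add: sum_extremal_sign_image extremal_vertices_def extremal_hubs_def card_cartesian_product)
  then have "real_of_int (sum (extremal_sign s) (extremal_V s)) = real (s * (s - 1) * (s - 1)) - real (s * (s - 1))"
    by (simp only: of_int_diff of_int_of_nat_eq)
  also have "\<dots> = real s * (real s - 1) * (real s - 2)"
    using assms by (simp only: of_nat_mult of_nat_diff of_nat_1) (simp add: algebra_simps)
  finally show ?thesis .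
qed

lemma istd_bound_extremal:
  assumes "s \<ge> 2"
  shows "istd_bound s (2 * (s - 1)) (s\<^sup>2 * (s - 1)) = real s * (real s - 1) * (real s - 2)"
proof -
  define x where "x = real s"
  have x: "x \<ge> 2" "real (s - 1) = x - 1" using assms unfolding x_def by (simp_all add: of_nat_diff)
  have "real (2 * (s - 1)) / 2 = real (s - 1)" by simp
  then have c: "real_of_int \<lceil>real (2 * (s - 1)) / 2\<rceil> = x - 1"
    unfolding x(2)[symmetric] by (simp only: ceiling_of_nat of_int_of_nat_eq)
  have "(x - 1)\<^sup>2 + 4 * ((x - 1) / x) * (x - 1) * real (s\<^sup>2 * (s - 1)) = ((x - 1) * (2 * x - 1))\<^sup>2"
    using x unfolding x_def by (simp add: field_simps power2_eq_square)
  then have "sqrt ((x - 1)\<^sup>2 + 4 * ((x - 1) / x) * (x - 1) * real (s\<^sup>2 * (s - 1))) = (x - 1) * (2 * x - 1)"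
    using x(1) by simp
  then have "istd_bound s (2 * (s - 1)) (s\<^sup>2 * (s - 1))
      = real (s\<^sup>2 * (s - 1)) - x / (x - 1) * (- (x - 1) + (x - 1) * (2 * x - 1))"
    unfolding istd_bound_def Let_def c x_def by simp
  also have "\<dots> = x * (x - 1) * (x - 2)"
    using x unfolding x_def by (simp add: field_simps power2_eq_square)
  finally show ?thesis unfolding x_def .
qed

lemma r_partite_extremal: "r_partite s (extremal_V s) (extremal_E s)"
  unfolding r_partite_def
proof (intro exI[of _ "\<lambda>x. fst (prod_decode x)"] conjI allI impI ballI)
  fix x assume "x \<in> extremal_V s"
  then show "fst (prod_decode x) < s"
    unfolding extremal_V_def triple_encode_def extremal_vertices_def by auto
next
  fix x y assume "extremal_E s x y"
  then obtain t t' where "x = triple_encode t" "y = triple_encode t'" "extremal_adj s t t'"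
    unfolding extremal_E_def by blast
  moreover have "fst t \<noteq> fst t'" using \<open>extremal_adj s t t'\<close> by (cases t; cases t') auto
  ultimately show "fst (prod_decode x) \<noteq> fst (prod_decode y)"
    unfolding triple_encode_def by simp
qed

text \<open>Every vertex reaches the hub \<open>(0, 0, s - 1)\<close>: first step to a hub of its own block in
  another part, then along hubs, which are adjacent whenever their parts differ.\<close>
lemma extremal_reaches_hub:
  assumes "s \<ge> 2" "t \<in> extremal_vertices s"
  shows "(extremal_E s)\<^sup>*\<^sup>* (triple_encode t) (triple_encode (0, 0, s - 1))"
proof -
  obtain a i j where t: "t = (a, i, j)" "i < s - 1"
    using assms(2) unfolding extremal_vertices_def by auto
  have step: "extremal_E s (triple_encode u) (triple_encode u')"
    if "u \<in> extremal_vertices s" "u' \<in> extremal_vertices s" "extremal_adj s u u'" for u u'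
    using that extremal_E_triple_encode by blast
  have in_V: "(b, i', s - 1) \<in> extremal_vertices s" if "b < s" "i' < s - 1" for b i'
    using that unfolding extremal_vertices_def by auto
  have hub_1_0: "extremal_E s (triple_encode (1, 0, s - 1)) (triple_encode (0, 0, s - 1))"
    using assms(1) by (intro step in_V) auto
  show ?thesis
  proof (cases "a = 0")
    case True
    have "extremal_E s (triple_encode t) (triple_encode (1, i, s - 1))"
      using assms t True by (intro step in_V) auto
    moreover have "extremal_E s (triple_encode (1, i, s - 1)) (triple_encode (0, 0, s - 1))"
      using assms t by (intro step in_V) auto
    ultimately show ?thesis by (meson converse_rtranclp_into_rtranclp rtranclp.rtrancl_refl)
  next
    case False
    have "extremal_E s (triple_encode t) (triple_encode (0, i, s - 1))"
      using assms t False by (intro step in_V) auto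
    moreover have "extremal_E s (triple_encode (0, i, s - 1)) (triple_encode (1, 0, s - 1))"
      using assms t by (intro step in_V) auto
    ultimately show ?thesis using hub_1_0 by (meson converse_rtranclp_into_rtranclp rtranclp.rtrancl_refl)
  qed
qed

lemma connected_extremal:
  assumes "s \<ge> 2"
  shows "connected_graph (extremal_V s) (extremal_E s)"
  unfolding connected_graph_def
proof (intro conjI ballI)
  have "(0, 0, 0) \<in> extremal_vertices s" using assms unfolding extremal_vertices_def by auto
  then show "extremal_V s \<noteq> {}" unfolding extremal_V_def by blast
  have sym: "symp (extremal_E s)"
    unfolding symp_def extremal_E_def using extremal_adj_sym by blast
  fix x y assume "x \<in> extremal_V s" "y \<in> extremal_V s"
  then obtain t t' where "t \<in> extremal_vertices s" "x = triple_encode t"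
    "t' \<in> extremal_vertices s" "y = triple_encode t'"
    unfolding extremal_V_def by blast
  then show "(extremal_E s)\<^sup>*\<^sup>* x y"
    using extremal_reaches_hub[OF assms] sympD[OF symp_rtranclp[OF sym]] rtranclp_trans by metis
qed

lemma inv_signed_total_dom_extremal:
  assumes "s \<ge> 2"
  shows "real_of_int (inv_signed_total_dom (extremal_V s) (extremal_E s))
    = istd_bound s (min_degree (extremal_V s) (extremal_E s)) (card (extremal_V s))"
proof (rule antisym)
  show "real_of_int (inv_signed_total_dom (extremal_V s) (extremal_E s))
      \<le> istd_bound s (min_degree (extremal_V s) (extremal_E s)) (card (extremal_V s))"
    using assms simple_graph_extremal r_partite_clique_free[OF r_partite_extremal]
    by (rule inv_signed_total_dom_le_istd_bound)
  have fin: "finite (extremal_V s)" using simple_graph_extremal unfolding simple_graph_def by blast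
  have "s \<ge> 1" using assms by simp
  then have "istd_bound s (min_degree (extremal_V s) (extremal_E s)) (card (extremal_V s))
      = real_of_int (sum (extremal_sign s) (extremal_V s))"
    unfolding min_degree_extremal[OF assms] card_extremal_V[OF \<open>s \<ge> 1\<close>] istd_bound_extremal[OF assms]
    by (rule weight_extremal_sign[symmetric])
  also have "\<dots> \<le> real_of_int (inv_signed_total_dom (extremal_V s) (extremal_E s))"
    using istdf_weight_le_inv_signed_total_dom[OF fin istdf_extremal_sign] by (simp only: of_int_le_iff)
  finally show "istd_bound s (min_degree (extremal_V s) (extremal_E s)) (card (extremal_V s))
      \<le> real_of_int (inv_signed_total_dom (extremal_V s) (extremal_E s))" .
qed

theorem theorem2p4:
  fixes V :: "'a set" and E :: "'a \<Rightarrow> 'a \<Rightarrow> bool" and r :: nat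
  assumes "r \<ge> 2"
    and "simple_graph V E"
    and "connected_graph V E"
    and "clique_free (r + 1) V E"
  shows "real_of_int (inv_signed_total_dom V E) \<le> istd_bound r (min_degree V E) (card V)
    \<and> (\<forall>s::nat. s \<ge> 2 \<longrightarrow> (\<exists>(W :: nat set) F. simple_graph W F \<and> connected_graph W F
          \<and> clique_free (s + 1) W F \<and> r_partite s W F \<and> card W = s\<^sup>2 * (s - 1)
          \<and> real_of_int (inv_signed_total_dom W F) = istd_bound s (min_degree W F) (card W)))"
proof (intro conjI allI impI)
  show "real_of_int (inv_signed_total_dom V E) \<le> istd_bound r (min_degree V E) (card V)"
    using assms(1,2,4) by (rule inv_signed_total_dom_le_istd_bound)
next
  fix s :: nat
  assume "s \<ge> 2"
  then show "\<exists>(W :: nat set) F. simple_graph W F \<and> connected_graph W F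
      \<and> clique_free (s + 1) W F \<and> r_partite s W F \<and> card W = s\<^sup>2 * (s - 1)
      \<and> real_of_int (inv_signed_total_dom W F) = istd_bound s (min_degree W F) (card W)"
    using simple_graph_extremal connected_extremal r_partite_clique_free[OF r_partite_extremal]
      r_partite_extremal card_extremal_V inv_signed_total_dom_extremal
    by (intro exI[of _ "extremal_V s"] exI[of _ "extremal_E s"]) auto
qed

end
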